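(* Let $k\ge 7$. Then there is a finite group $H$ with an elementary abelian $2$-subgroup $1\ne M\trianglelefteq H$ such that $H/M\cong A_k$, the extension $1\to M\to H\to A_k\to 1$ is nonsplit, and $H$ has a faithful transitive permutation representation of degree at most $2k(k-1)$.
   Context: An extension is nonsplit if $M$ has no complement in $H$. *)

theory Defs
  imports "HOL-Algebra.Algebra"
begin

definition elementary_abelian_2_subgroup :: "('a, 'b) monoid_scheme \<Rightarrow> 'a set \<Rightarrow> bool" where
  "elementary_abelian_2_subgroup G M \<longleftrightarrow>
     subgroup M G \<and>
     (\<forall>x\<in>M. \<forall>y\<in>M. x \<otimes>\<^bsub>G\<^esub> y = y \<otimes>\<^bsub>G\<^esub> x) \<and>
     (\<forall>x\<in>M. x \<otimes>\<^bsub>G\<^esub> x = \<one>\<^bsub>G\<^esub>)"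

definition is_complement :: "('a, 'b) monoid_scheme \<Rightarrow> 'a set \<Rightarrow> 'a set \<Rightarrow> bool" where
  "is_complement G M K \<longleftrightarrow>
     subgroup K G \<and> K \<inter> M = {\<one>\<^bsub>G\<^esub>} \<and> M <#>\<^bsub>G\<^esub> K = carrier G"

definition nonsplit_extension :: "('a, 'b) monoid_scheme \<Rightarrow> 'a set \<Rightarrow> bool" where
  "nonsplit_extension G M \<longleftrightarrow> \<not> (\<exists>K. is_complement G M K)"

end

theory Submission
  imports Defs "HOL-Library.Countable"
begin

text \<open>
  Let \<open>H\<close> consist of the pairs \<open>(\<sigma>, d)\<close> with \<open>\<sigma> \<in> A\<^sub>k\<close> and \<open>d\<close> a \<open>\<int>/2\<close>-valued
  function on ordered pairs of distinct points such that \<open>d(i,j) + d(j,i)\<close> records whether \<open>\<sigma>\<close>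
  reverses the order of \<open>i\<close> and \<open>j\<close>. It acts faithfully on the \<open>2k(k-1)\<close> signed ordered pairs
  by \<open>(i,j,s) \<mapsto> (\<sigma> i, \<sigma> j, s + d(i,j))\<close>, transitively because \<open>A\<^sub>k\<close> is 2-transitive.
  The projection \<open>(\<sigma>, d) \<mapsto> \<sigma>\<close> is onto \<open>A\<^sub>k\<close>, and its kernel consists of the symmetric \<open>d\<close>,
  an elementary abelian 2-group. A lift \<open>(\<sigma>, d)\<close> of the involution \<open>\<sigma> = (1 2)(3 4)\<close> has
  \<open>d(1,2) \<noteq> d(2,1)\<close>, so its square carries the sign \<open>d(1,2) + d(2,1) = 1\<close> at \<open>(1,2)\<close>:
  no involution lies over \<open>\<sigma>\<close>, whereas a complement of the kernel would contain one.
\<close>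

lemma (in group_hom) nonsplit_extension_kernelI:
  assumes q: "q \<in> h ` carrier G" "q \<otimes>\<^bsub>H\<^esub> q = \<one>\<^bsub>H\<^esub>"
    and no_involutive_lift: "\<And>x. x \<in> carrier G \<Longrightarrow> h x = q \<Longrightarrow> x \<otimes> x \<noteq> \<one>"
  shows "nonsplit_extension G (kernel G H h)"
  unfolding nonsplit_extension_def is_complement_def
proof
  assume "\<exists>K. subgroup K G \<and> K \<inter> kernel G H h = {\<one>} \<and> kernel G H h <#> K = carrier G"
  then obtain K where K: "subgroup K G" "K \<inter> kernel G H h = {\<one>}" "kernel G H h <#> K = carrier G"
    by blast
  obtain x where x: "x \<in> carrier G" "h x = q" using q(1) by blast
  then obtain m y where my: "m \<in> kernel G H h" "y \<in> K" "x = m \<otimes> y"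
    using K(3) unfolding set_mult_def by blast
  have y: "y \<in> carrier G" using my(2) subgroup.subset[OF K(1)] by blast
  have m: "m \<in> carrier G" "h m = \<one>\<^bsub>H\<^esub>" using my(1) by (auto simp: kernel_def)
  have "h y = q" using x my m y by simp
  then have "y \<otimes> y \<in> K \<inter> kernel G H h"
    using subgroup.m_closed[OF K(1) my(2) my(2)] y q(2) by (simp add: kernel_def)
  then have "y \<otimes> y = \<one>" using K(2) by blast
  with no_involutive_lift y \<open>h y = q\<close> show False by blast
qed

locale nonsplit_elementary_abelian_2_cover = group_hom G Q \<psi> for G Q \<psi> +
  assumes surj: "\<psi> ` carrier G = carrier Q"
    and kernel_nontrivial: "\<exists>x\<in>carrier G. \<psi> x = \<one>\<^bsub>Q\<^esub> \<and> x \<noteq> \<one>\<^bsub>G\<^esub>"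
    and kernel_commute: "\<And>x y. \<lbrakk>x \<in> carrier G; y \<in> carrier G; \<psi> x = \<one>\<^bsub>Q\<^esub>; \<psi> y = \<one>\<^bsub>Q\<^esub>\<rbrakk>
                           \<Longrightarrow> x \<otimes>\<^bsub>G\<^esub> y = y \<otimes>\<^bsub>G\<^esub> x"
    and kernel_square: "\<And>x. \<lbrakk>x \<in> carrier G; \<psi> x = \<one>\<^bsub>Q\<^esub>\<rbrakk> \<Longrightarrow> x \<otimes>\<^bsub>G\<^esub> x = \<one>\<^bsub>G\<^esub>"
    and involution_without_involutive_lift:
      "\<exists>q\<in>carrier Q. q \<otimes>\<^bsub>Q\<^esub> q = \<one>\<^bsub>Q\<^esub> \<and> (\<forall>x\<in>carrier G. \<psi> x = q \<longrightarrow> x \<otimes>\<^bsub>G\<^esub> x \<noteq> \<one>\<^bsub>G\<^esub>)"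
begin

lemma kernel_elementary_abelian_2: "elementary_abelian_2_subgroup G (kernel G Q \<psi>)"
  unfolding elementary_abelian_2_subgroup_def
  using subgroup_kernel kernel_commute kernel_square by (auto simp: kernel_def)

lemma kernel_ne_trivial: "kernel G Q \<psi> \<noteq> {\<one>\<^bsub>G\<^esub>}"
  using kernel_nontrivial by (auto simp: kernel_def)

lemma kernel_nonsplit: "nonsplit_extension G (kernel G Q \<psi>)"
proof -
  obtain q where "q \<in> carrier Q" "q \<otimes>\<^bsub>Q\<^esub> q = \<one>\<^bsub>Q\<^esub>"
    and "\<And>x. x \<in> carrier G \<Longrightarrow> \<psi> x = q \<Longrightarrow> x \<otimes>\<^bsub>G\<^esub> x \<noteq> \<one>\<^bsub>G\<^esub>"
    using involution_without_involutive_lift by blast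
  then show ?thesis using surj by (intro nonsplit_extension_kernelI) auto
qed

end

lemma nonsplit_elementary_abelian_2_cover_iso_pullback:
  assumes cover: "nonsplit_elementary_abelian_2_cover G Q \<psi>"
    and H: "group H" and g: "g \<in> iso H G"
  shows "nonsplit_elementary_abelian_2_cover H Q (\<psi> \<circ> g)"
proof -
  interpret cover: nonsplit_elementary_abelian_2_cover G Q \<psi> by (rule cover)
  interpret H: group H by (rule H)
  interpret g: group_hom H G g using g H by (simp add: group_hom_def group_hom_axioms_def iso_def)
  have onto: "g ` carrier H = carrier G" and inj: "inj_on g (carrier H)"
    using g by (auto simp: iso_def bij_betw_def)
  have g_eq: "g x = g y \<longleftrightarrow> x = y" if "x \<in> carrier H" "y \<in> carrier H" for x y
    using inj that by (auto dest: inj_onD)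
  have g_eq_one: "g x = \<one>\<^bsub>G\<^esub> \<longleftrightarrow> x = \<one>\<^bsub>H\<^esub>" if "x \<in> carrier H" for x
    using g_eq[OF that H.one_closed] by simp
  have lift: "\<exists>x\<in>carrier H. P (g x)" if "\<exists>y\<in>carrier G. P y" for P
    using that onto by (metis imageE)
  show ?thesis
  proof unfold_locales
    show "\<psi> \<circ> g \<in> hom H Q" using g.homh cover.homh by (rule hom_compose)
    show "(\<psi> \<circ> g) ` carrier H = carrier Q" by (metis image_comp onto cover.surj)
    show "\<exists>x\<in>carrier H. (\<psi> \<circ> g) x = \<one>\<^bsub>Q\<^esub> \<and> x \<noteq> \<one>\<^bsub>H\<^esub>"
      using lift[OF cover.kernel_nontrivial] g_eq_one by auto
    show "x \<otimes>\<^bsub>H\<^esub> y = y \<otimes>\<^bsub>H\<^esub> x"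
      if "x \<in> carrier H" "y \<in> carrier H" "(\<psi> \<circ> g) x = \<one>\<^bsub>Q\<^esub>" "(\<psi> \<circ> g) y = \<one>\<^bsub>Q\<^esub>" for x y
      using that cover.kernel_commute[of "g x" "g y"] g_eq[of "x \<otimes>\<^bsub>H\<^esub> y" "y \<otimes>\<^bsub>H\<^esub> x"] by simp
    show "x \<otimes>\<^bsub>H\<^esub> x = \<one>\<^bsub>H\<^esub>" if "x \<in> carrier H" "(\<psi> \<circ> g) x = \<one>\<^bsub>Q\<^esub>" for x
      using that cover.kernel_square[of "g x"] g_eq_one[of "x \<otimes>\<^bsub>H\<^esub> x"] by simp
    show "\<exists>q\<in>carrier Q. q \<otimes>\<^bsub>Q\<^esub> q = \<one>\<^bsub>Q\<^esub> \<and>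
        (\<forall>x\<in>carrier H. (\<psi> \<circ> g) x = q \<longrightarrow> x \<otimes>\<^bsub>H\<^esub> x \<noteq> \<one>\<^bsub>H\<^esub>)"
    proof -
      obtain q where q: "q \<in> carrier Q" "q \<otimes>\<^bsub>Q\<^esub> q = \<one>\<^bsub>Q\<^esub>"
        and no_lift: "\<And>y. y \<in> carrier G \<Longrightarrow> \<psi> y = q \<Longrightarrow> y \<otimes>\<^bsub>G\<^esub> y \<noteq> \<one>\<^bsub>G\<^esub>"
        using cover.involution_without_involutive_lift by blast
      have "x \<otimes>\<^bsub>H\<^esub> x \<noteq> \<one>\<^bsub>H\<^esub>" if "x \<in> carrier H" "(\<psi> \<circ> g) x = q" for x
        using that no_lift[of "g x"] g_eq_one[of "x \<otimes>\<^bsub>H\<^esub> x"] by auto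
      with q show ?thesis by blast
    qed
  qed
qed

lemma group_actionI:
  assumes G: "group G"
    and closed: "\<And>g x. g \<in> carrier G \<Longrightarrow> x \<in> E \<Longrightarrow> act g x \<in> E"
    and compose: "\<And>g h x. \<lbrakk>g \<in> carrier G; h \<in> carrier G; x \<in> E\<rbrakk> \<Longrightarrow> act (g \<otimes>\<^bsub>G\<^esub> h) x = act g (act h x)"
    and one: "\<And>x. x \<in> E \<Longrightarrow> act \<one>\<^bsub>G\<^esub> x = x"
  shows "group_action G E (\<lambda>g. restrict (act g) E)"
proof -
  interpret G: group G by (rule G)
  have cancel: "act (inv\<^bsub>G\<^esub> g) (act g x) = x" "act g (act (inv\<^bsub>G\<^esub> g) x) = x"
    if "g \<in> carrier G" "x \<in> E" for g x
    using compose[of "inv\<^bsub>G\<^esub> g" g x] compose[of g "inv\<^bsub>G\<^esub> g" x] one that by simp_all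
  have bij: "restrict (act g) E \<in> Bij E" if g: "g \<in> carrier G" for g
  proof -
    have "bij_betw (act g) E E"
      by (rule bij_betw_byWitness[where f' = "act (inv\<^bsub>G\<^esub> g)"]) (use g closed cancel in auto)
    then show ?thesis by (simp add: Bij_def)
  qed
  have "(\<lambda>g. restrict (act g) E) \<in> hom G (BijGroup E)"
  proof (rule homI)
    show "restrict (act g) E \<in> carrier (BijGroup E)" if "g \<in> carrier G" for g
      using bij that by (simp add: BijGroup_def)
    show "restrict (act (g \<otimes>\<^bsub>G\<^esub> h)) E = restrict (act g) E \<otimes>\<^bsub>BijGroup E\<^esub> restrict (act h) E"
      if "g \<in> carrier G" "h \<in> carrier G" for g h
    proof -
      have "restrict (act (g \<otimes>\<^bsub>G\<^esub> h)) E = compose E (restrict (act g) E) (restrict (act h) E)"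
        using that closed compose by (auto simp: compose_def)
      then show ?thesis using bij that by (simp add: BijGroup_def)
    qed
  qed
  then show ?thesis
    by (simp add: group_action_def group_hom_def group_hom_axioms_def G group_BijGroup)
qed

lemma (in faithful_action) finite_carrier:
  assumes "finite E"
  shows "finite (carrier G)"
proof (rule finite_imageD[OF _ faithful])
  have "\<phi> ` carrier G \<subseteq> E \<rightarrow>\<^sub>E E"
    using bij_prop0 by (auto simp: Bij_def bij_betw_def PiE_iff extensional_def)
  then show "finite (\<phi> ` carrier G)" by (rule finite_subset) (simp add: assms finite_PiE)
qed

lemma group_action_comp_hom:
  assumes "group_action G E \<phi>" "group H" "g \<in> hom H G"
  shows "group_action H E (\<phi> \<circ> g)"
  using assms hom_compose unfolding group_action_def group_hom_def group_hom_axioms_def by blast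

lemma faithful_action_comp_iso:
  assumes "faithful_action G E \<phi>" "group H" "g \<in> iso H G"
  shows "faithful_action H E (\<phi> \<circ> g)"
proof -
  have "inj_on g (carrier H)" "g ` carrier H = carrier G" using assms(3) by (auto simp: iso_def bij_betw_def)
  then have "inj_on (\<phi> \<circ> g) (carrier H)"
    using assms(1) by (simp add: faithful_action_def faithful_action_axioms_def comp_inj_on)
  then show ?thesis
    using assms group_action_comp_hom[of G E \<phi> H g]
    by (simp add: faithful_action_def faithful_action_axioms_def iso_def)
qed

lemma transitive_action_comp_iso:
  assumes "transitive_action G E \<phi>" "group H" "g \<in> iso H G"
  shows "transitive_action H E (\<phi> \<circ> g)"
proof -
  have onto: "g ` carrier H = carrier G" using assms(3) by (auto simp: iso_def bij_betw_def)
  have "\<exists>h\<in>carrier H. (\<phi> \<circ> g) h x = y" if "x \<in> E" "y \<in> E" for x y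
    using transitive_action.unique_orbit[OF assms(1) that] onto by force
  then show ?thesis
    using assms group_action_comp_hom[of G E \<phi> H g]
    by (simp add: transitive_action_def transitive_action_axioms_def iso_def)
qed

lemma group_iso_copy:
  fixes G :: "'a monoid" and f :: "'a \<Rightarrow> 'b"
  assumes G: "group G" and inj: "inj_on f (carrier G)"
  shows "\<exists>(H :: 'b monoid) g. group H \<and> g \<in> iso H G"
proof -
  interpret G: group G by (rule G)
  define g where "g = inv_into (carrier G) f"
  define H where "H = \<lparr>carrier = f ` carrier G, monoid.mult = (\<lambda>x y. f (g x \<otimes>\<^bsub>G\<^esub> g y)), one = f \<one>\<^bsub>G\<^esub>\<rparr>"
  have gf: "g (f a) = a" if "a \<in> carrier G" for a unfolding g_def using inj that by simp
  have H_simps: "carrier H = f ` carrier G" "x \<otimes>\<^bsub>H\<^esub> y = f (g x \<otimes>\<^bsub>G\<^esub> g y)" "\<one>\<^bsub>H\<^esub> = f \<one>\<^bsub>G\<^esub>" for x y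
    unfolding H_def by simp_all
  have "group H"
  proof (rule groupI)
    fix x assume "x \<in> carrier H"
    then obtain a where a: "a \<in> carrier G" "x = f a" by (auto simp: H_simps)
    then show "\<exists>y\<in>carrier H. y \<otimes>\<^bsub>H\<^esub> x = \<one>\<^bsub>H\<^esub>"
      by (intro bexI[of _ "f (inv\<^bsub>G\<^esub> a)"]) (simp_all add: H_simps gf)
  qed (auto simp: H_simps gf G.m_assoc)
  moreover have "g \<in> hom H G" unfolding hom_def by (auto simp: H_simps gf)
  moreover have "bij_betw g (carrier H) (carrier G)"
    unfolding H_simps g_def by (rule bij_betw_inv_into[OF inj_on_imp_bij_betw[OF inj]])
  ultimately show ?thesis unfolding iso_def by blast
qed

lemma even_permutation_two_transitive:
  fixes k :: nat
  assumes k: "k \<ge> 4" and ij: "i \<in> {1..k}" "j \<in> {1..k}" "i \<noteq> j"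
    and ij': "i' \<in> {1..k}" "j' \<in> {1..k}" "i' \<noteq> j'"
  obtains \<sigma> where "\<sigma> permutes {1..k}" "evenperm \<sigma>" "\<sigma> i = i'" "\<sigma> j = j'"
proof -
  define j1 where "j1 = transpose i i' j"
  have j1: "j1 \<in> {1..k}" "j1 \<noteq> i'" unfolding j1_def transpose_def using ij ij' by auto
  define \<sigma>1 where "\<sigma>1 = transpose j1 j' \<circ> transpose i i'"
  have \<sigma>1: "\<sigma>1 permutes {1..k}" unfolding \<sigma>1_def using ij ij' j1
    by (intro permutes_compose permutes_swap_id) auto
  have \<sigma>1_ij: "\<sigma>1 i = i'" "\<sigma>1 j = j'" unfolding \<sigma>1_def j1_def using j1 ij' ij
    by (auto simp: transpose_def j1_def)
  \<comment> \<open>If \<open>\<sigma>1\<close> is odd, a transposition of two further points (here \<open>k \<ge> 4\<close> is needed) fixes the parity.\<close>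
  show ?thesis
  proof (cases "evenperm \<sigma>1")
    case True
    show ?thesis by (rule that[OF \<sigma>1 True \<sigma>1_ij])
  next
    case False
    have "card ({1..k} - {i', j'}) = k - 2" using ij' by (subst card_Diff_subset) auto
    then have "\<not> card ({1..k} - {i', j'}) \<le> Suc 0" using k by simp
    then obtain a b where ab: "a \<in> {1..k} - {i', j'}" "b \<in> {1..k} - {i', j'}" "a \<noteq> b"
      using card_le_Suc0_iff_eq[OF finite_Diff[OF finite_atLeastAtMost]] by blast
    have t: "transpose a b permutes {1..k}" using ab by (intro permutes_swap_id) auto
    show ?thesis
    proof (rule that)
      show "transpose a b \<circ> \<sigma>1 permutes {1..k}" using \<sigma>1 t by (rule permutes_compose)
      show "evenperm (transpose a b \<circ> \<sigma>1)"
        using evenperm_comp[OF permutes_imp_permutation[OF _ t] permutes_imp_permutation[OF _ \<sigma>1]]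
          False ab(3) by (simp add: evenperm_swap)
      show "(transpose a b \<circ> \<sigma>1) i = i'" "(transpose a b \<circ> \<sigma>1) j = j'" using \<sigma>1_ij ab by auto
    qed
  qed
qed

type_synonym signed_perm = "(nat \<Rightarrow> nat) \<times> (nat \<times> nat \<Rightarrow> bool)"

definition inverts :: "(nat \<Rightarrow> nat) \<Rightarrow> nat \<Rightarrow> nat \<Rightarrow> bool" where
  "inverts \<sigma> i j \<longleftrightarrow> (i < j) \<noteq> (\<sigma> i < \<sigma> j)"

lemma inverts_comp: "inverts (\<tau> \<circ> \<sigma>) i j \<longleftrightarrow> inverts \<sigma> i j \<noteq> inverts \<tau> (\<sigma> i) (\<sigma> j)"
  by (auto simp: inverts_def)

definition signed_alt_carrier :: "nat \<Rightarrow> signed_perm set" where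
  "signed_alt_carrier k = {(\<sigma>, d). \<sigma> permutes {1..k} \<and> evenperm \<sigma> \<and>
     (\<forall>i j. d (i, j) \<longrightarrow> i \<in> {1..k} \<and> j \<in> {1..k} \<and> i \<noteq> j) \<and>
     (\<forall>i\<in>{1..k}. \<forall>j\<in>{1..k}. i \<noteq> j \<longrightarrow> (d (i, j) \<noteq> d (j, i)) = inverts \<sigma> i j)}"

text \<open>Composition of the actions on signed pairs: \<open>(\<tau>, e) (\<sigma>, d)\<close> sends \<open>(i, j, s)\<close> to
  \<open>(\<tau> (\<sigma> i), \<tau> (\<sigma> j), s + d(i,j) + e(\<sigma> i, \<sigma> j))\<close>.\<close>

definition signed_mult :: "signed_perm \<Rightarrow> signed_perm \<Rightarrow> signed_perm" where
  "signed_mult x y = (fst x \<circ> fst y, \<lambda>(i, j). snd y (i, j) \<noteq> snd x (fst y i, fst y j))"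

definition signed_alt_group :: "nat \<Rightarrow> signed_perm monoid" where
  "signed_alt_group k = \<lparr>carrier = signed_alt_carrier k, monoid.mult = signed_mult, one = (id, \<lambda>_. False)\<rparr>"

lemma signed_alt_carrier_iff:
  "(\<sigma>, d) \<in> signed_alt_carrier k \<longleftrightarrow> \<sigma> permutes {1..k} \<and> evenperm \<sigma> \<and>
     (\<forall>i j. d (i, j) \<longrightarrow> i \<in> {1..k} \<and> j \<in> {1..k} \<and> i \<noteq> j) \<and>
     (\<forall>i\<in>{1..k}. \<forall>j\<in>{1..k}. i \<noteq> j \<longrightarrow> (d (i, j) \<noteq> d (j, i)) = inverts \<sigma> i j)"
  by (simp add: signed_alt_carrier_def)

lemma signed_alt_carrierD:
  assumes "(\<sigma>, d) \<in> signed_alt_carrier k"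
  shows "\<sigma> permutes {1..k}" "evenperm \<sigma>"
    and "d (i, j) \<Longrightarrow> i \<in> {1..k} \<and> j \<in> {1..k} \<and> i \<noteq> j"
    and "\<lbrakk>i \<in> {1..k}; j \<in> {1..k}; i \<noteq> j\<rbrakk> \<Longrightarrow> (d (i, j) \<noteq> d (j, i)) = inverts \<sigma> i j"
  using assms by (auto simp: signed_alt_carrier_iff)

lemma signed_mult_Pair: "signed_mult (\<tau>, e) (\<sigma>, d) = (\<tau> \<circ> \<sigma>, \<lambda>(i, j). d (i, j) \<noteq> e (\<sigma> i, \<sigma> j))"
  by (simp add: signed_mult_def)

lemma signed_alt_group_simps:
  "carrier (signed_alt_group k) = signed_alt_carrier k"
  "x \<otimes>\<^bsub>signed_alt_group k\<^esub> y = signed_mult x y"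
  "\<one>\<^bsub>signed_alt_group k\<^esub> = (id, \<lambda>_. False)"
  by (simp_all add: signed_alt_group_def)

lemma permutes_atLeastAtMost_iff:
  assumes "\<sigma> permutes {1..k::nat}"
  shows "\<sigma> i \<in> {1..k} \<longleftrightarrow> i \<in> {1..k}" and "\<sigma> i = \<sigma> j \<longleftrightarrow> i = j"
  using permutes_in_image[OF assms] permutes_inj[OF assms] by (auto dest: injD)

lemma signed_mult_closed:
  assumes x: "(\<tau>, e) \<in> signed_alt_carrier k" and y: "(\<sigma>, d) \<in> signed_alt_carrier k"
  shows "signed_mult (\<tau>, e) (\<sigma>, d) \<in> signed_alt_carrier k"
proof -
  note \<tau> = signed_alt_carrierD[OF x] and \<sigma> = signed_alt_carrierD[OF y]
  note \<sigma>_iff = permutes_atLeastAtMost_iff[OF \<sigma>(1)]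
  have "\<tau> \<circ> \<sigma> permutes {1..k}" using \<sigma>(1) \<tau>(1) by (rule permutes_compose)
  moreover have "evenperm (\<tau> \<circ> \<sigma>)"
    using \<sigma>(2) \<tau>(2) by (simp add: evenperm_comp[OF permutes_imp_permutation[OF _ \<tau>(1)]
          permutes_imp_permutation[OF _ \<sigma>(1)]])
  moreover have "i \<in> {1..k} \<and> j \<in> {1..k} \<and> i \<noteq> j" if "d (i, j) \<noteq> e (\<sigma> i, \<sigma> j)" for i j
    using that \<sigma>(3)[of i j] \<tau>(3)[of "\<sigma> i" "\<sigma> j"] \<sigma>_iff by auto
  moreover have "((d (i, j) \<noteq> e (\<sigma> i, \<sigma> j)) \<noteq> (d (j, i) \<noteq> e (\<sigma> j, \<sigma> i))) = inverts (\<tau> \<circ> \<sigma>) i j"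
    if "i \<in> {1..k}" "j \<in> {1..k}" "i \<noteq> j" for i j
    using that \<sigma>(4)[of i j] \<tau>(4)[of "\<sigma> i" "\<sigma> j"] \<sigma>_iff by (auto simp: inverts_comp)
  ultimately show ?thesis by (simp add: signed_mult_Pair signed_alt_carrier_iff)
qed

lemma signed_inverse:
  fixes \<sigma> :: "nat \<Rightarrow> nat"
  assumes x: "(\<sigma>, d) \<in> signed_alt_carrier k"
  defines "\<rho> \<equiv> Hilbert_Choice.inv \<sigma>"
  shows "(\<rho>, \<lambda>(i, j). d (\<rho> i, \<rho> j)) \<in> signed_alt_carrier k"
    and "signed_mult (\<rho>, \<lambda>(i, j). d (\<rho> i, \<rho> j)) (\<sigma>, d) = (id, \<lambda>_. False)"
proof -
  note \<sigma> = signed_alt_carrierD[OF x]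
  have \<rho>: "\<rho> permutes {1..k}" unfolding \<rho>_def using \<sigma>(1) by (rule permutes_inv)
  note \<rho>_iff = permutes_atLeastAtMost_iff[OF \<rho>]
  have \<sigma>\<rho>: "\<sigma> (\<rho> i) = i" "\<rho> (\<sigma> i) = i" for i
    unfolding \<rho>_def using permutes_inverses[OF \<sigma>(1)] by auto
  have "evenperm \<rho>"
    unfolding \<rho>_def using \<sigma>(2) by (simp add: evenperm_inv[OF permutes_imp_permutation[OF _ \<sigma>(1)]])
  moreover have "i \<in> {1..k} \<and> j \<in> {1..k} \<and> i \<noteq> j" if "d (\<rho> i, \<rho> j)" for i j
    using that \<sigma>(3)[of "\<rho> i" "\<rho> j"] \<rho>_iff by auto
  moreover have "(d (\<rho> i, \<rho> j) \<noteq> d (\<rho> j, \<rho> i)) = inverts \<rho> i j"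
    if "i \<in> {1..k}" "j \<in> {1..k}" "i \<noteq> j" for i j
    using that \<sigma>(4)[of "\<rho> i" "\<rho> j"] \<rho>_iff by (auto simp: inverts_def \<sigma>\<rho>)
  ultimately show "(\<rho>, \<lambda>(i, j). d (\<rho> i, \<rho> j)) \<in> signed_alt_carrier k"
    using \<rho> by (simp add: signed_alt_carrier_iff)
  show "signed_mult (\<rho>, \<lambda>(i, j). d (\<rho> i, \<rho> j)) (\<sigma>, d) = (id, \<lambda>_. False)"
    by (auto simp: signed_mult_Pair \<sigma>\<rho> fun_eq_iff)
qed

lemma group_signed_alt_group: "group (signed_alt_group k)"
proof (rule groupI)
  show "x \<otimes>\<^bsub>signed_alt_group k\<^esub> y \<in> carrier (signed_alt_group k)"
    if "x \<in> carrier (signed_alt_group k)" "y \<in> carrier (signed_alt_group k)" for x y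
    using that signed_mult_closed[of "fst x" "snd x" k "fst y" "snd y"] by (simp add: signed_alt_group_simps)
  show "\<one>\<^bsub>signed_alt_group k\<^esub> \<in> carrier (signed_alt_group k)"
    by (simp add: signed_alt_group_simps signed_alt_carrier_iff inverts_def)
  show "x \<otimes>\<^bsub>signed_alt_group k\<^esub> y \<otimes>\<^bsub>signed_alt_group k\<^esub> z =
        x \<otimes>\<^bsub>signed_alt_group k\<^esub> (y \<otimes>\<^bsub>signed_alt_group k\<^esub> z)" for x y z
    by (auto simp: signed_alt_group_simps signed_mult_def fun_eq_iff)
  show "\<one>\<^bsub>signed_alt_group k\<^esub> \<otimes>\<^bsub>signed_alt_group k\<^esub> x = x" for x
    by (auto simp: signed_alt_group_simps signed_mult_def)
  show "\<exists>y\<in>carrier (signed_alt_group k). y \<otimes>\<^bsub>signed_alt_group k\<^esub> x = \<one>\<^bsub>signed_alt_group k\<^esub>"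
    if "x \<in> carrier (signed_alt_group k)" for x
    using that signed_inverse[of "fst x" "snd x" k] by (auto simp: signed_alt_group_simps)
qed

lemma fst_hom_signed_alt_group: "fst \<in> hom (signed_alt_group k) (alt_group k)"
  by (auto simp: hom_def signed_alt_group_simps signed_alt_carrier_def alt_group_carrier
      alt_group_mult signed_mult_def)

definition inversion_signs :: "nat \<Rightarrow> (nat \<Rightarrow> nat) \<Rightarrow> nat \<times> nat \<Rightarrow> bool" where
  "inversion_signs k \<sigma> = (\<lambda>(i, j). i \<in> {1..k} \<and> j \<in> {1..k} \<and> i < j \<and> \<sigma> j < \<sigma> i)"

lemma inversion_signs_in_carrier:
  assumes "\<sigma> permutes {1..k}" "evenperm \<sigma>"
  shows "(\<sigma>, inversion_signs k \<sigma>) \<in> signed_alt_carrier k"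
  using assms permutes_atLeastAtMost_iff(2)[OF assms(1)]
  by (auto simp: signed_alt_carrier_iff inversion_signs_def inverts_def linorder_not_less le_less)

lemma toggle_signs_in_carrier:
  assumes "(\<sigma>, d) \<in> signed_alt_carrier k" "i \<in> {1..k}" "j \<in> {1..k}" "i \<noteq> j"
  shows "(\<sigma>, \<lambda>p. d p \<noteq> (t \<and> (p = (i, j) \<or> p = (j, i)))) \<in> signed_alt_carrier k"
  using assms by (auto simp: signed_alt_carrier_iff)

lemma fst_signed_alt_group_surj: "fst ` carrier (signed_alt_group k) = carrier (alt_group k)"
proof
  show "fst ` carrier (signed_alt_group k) \<subseteq> carrier (alt_group k)"
    using fst_hom_signed_alt_group hom_carrier by blast
  show "carrier (alt_group k) \<subseteq> fst ` carrier (signed_alt_group k)"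
    using inversion_signs_in_carrier
    by (force simp: alt_group_carrier signed_alt_group_simps)
qed

lemma double_transposition_in_alt_group:
  assumes "k \<ge> 4"
  shows "transpose 1 2 \<circ> transpose 3 4 \<in> carrier (alt_group k)"
proof -
  have t: "transpose 1 2 permutes {1..k}" "transpose 3 4 permutes {1..k}"
    using assms by (auto intro!: permutes_swap_id)
  have "evenperm (transpose 1 2 \<circ> transpose 3 4 :: nat \<Rightarrow> nat)"
    by (subst evenperm_comp[OF permutes_imp_permutation[OF _ t(1)] permutes_imp_permutation[OF _ t(2)]])
      (simp_all add: evenperm_swap)
  with t show ?thesis by (simp add: alt_group_carrier permutes_compose)
qed

lemma double_transposition_no_involutive_lift:
  assumes "k \<ge> 4" and x: "x \<in> carrier (signed_alt_group k)" "fst x = transpose 1 2 \<circ> transpose 3 4"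
  shows "x \<otimes>\<^bsub>signed_alt_group k\<^esub> x \<noteq> \<one>\<^bsub>signed_alt_group k\<^esub>"
proof -
  define \<sigma> :: "nat \<Rightarrow> nat" where "\<sigma> = transpose 1 2 \<circ> transpose 3 4"
  obtain d where xd: "x = (\<sigma>, d)" using x(2) unfolding \<sigma>_def by (metis prod.collapse)
  have \<sigma>_12: "\<sigma> 1 = 2" "\<sigma> 2 = 1" by (simp_all add: \<sigma>_def)
  have "inverts \<sigma> 1 2" unfolding inverts_def \<sigma>_12 by simp
  then have "d (1, 2) \<noteq> d (2, 1)"
    using signed_alt_carrierD(4)[of \<sigma> d k 1 2] x(1) assms(1) by (simp add: xd signed_alt_group_simps)
  moreover have "snd (signed_mult x x) (1, 2) = (d (1, 2) \<noteq> d (\<sigma> 1, \<sigma> 2))"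
    by (simp add: xd signed_mult_Pair)
  ultimately have "snd (signed_mult x x) (1, 2)" unfolding \<sigma>_12 by simp
  then show ?thesis by (auto simp: signed_alt_group_simps)
qed

lemma signed_alt_group_cover:
  assumes k: "k \<ge> 4"
  shows "nonsplit_elementary_abelian_2_cover (signed_alt_group k) (alt_group k) fst"
proof -
  interpret group_hom "signed_alt_group k" "alt_group k" fst
    by (simp add: group_hom_def group_hom_axioms_def group_signed_alt_group alt_group_is_group
        fst_hom_signed_alt_group)
  show ?thesis
  proof (unfold_locales, unfold alt_group_one)
    show "fst ` carrier (signed_alt_group k) = carrier (alt_group k)" by (rule fst_signed_alt_group_surj)
    let ?x = "(id, \<lambda>p. p = (1, 2) \<or> p = (2, 1)) :: signed_perm"
    have "?x \<in> carrier (signed_alt_group k)"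
      using k by (auto simp: signed_alt_group_simps signed_alt_carrier_iff inverts_def)
    moreover have "?x \<noteq> \<one>\<^bsub>signed_alt_group k\<^esub>"
      by (auto simp: signed_alt_group_simps dest: fun_cong[where x = "(1, 2)"])
    ultimately show "\<exists>x\<in>carrier (signed_alt_group k). fst x = id \<and> x \<noteq> \<one>\<^bsub>signed_alt_group k\<^esub>"
      by (intro bexI[of _ ?x]) auto
    show "x \<otimes>\<^bsub>signed_alt_group k\<^esub> y = y \<otimes>\<^bsub>signed_alt_group k\<^esub> x"
      if xy: "x \<in> carrier (signed_alt_group k)" "y \<in> carrier (signed_alt_group k)" "fst x = id" "fst y = id"
      for x y
    proof -
      obtain d e where "x = (id, d)" "y = (id, e)"
        using xy(3,4) by (metis prod.collapse)
      then show ?thesis by (auto simp: signed_alt_group_simps signed_mult_Pair fun_eq_iff)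
    qed
    show "x \<otimes>\<^bsub>signed_alt_group k\<^esub> x = \<one>\<^bsub>signed_alt_group k\<^esub>"
      if x: "x \<in> carrier (signed_alt_group k)" "fst x = id" for x
    proof -
      obtain d where "x = (id, d)" using x(2) by (metis prod.collapse)
      then show ?thesis by (auto simp: signed_alt_group_simps signed_mult_Pair fun_eq_iff)
    qed
    have "(transpose 1 2 \<circ> transpose 3 4) \<otimes>\<^bsub>alt_group k\<^esub> (transpose 1 2 \<circ> transpose 3 4) = id"
      by (auto simp: alt_group_mult fun_eq_iff transpose_def)
    then show "\<exists>q\<in>carrier (alt_group k). q \<otimes>\<^bsub>alt_group k\<^esub> q = id \<and>
        (\<forall>x\<in>carrier (signed_alt_group k). fst x = q \<longrightarrow>
           x \<otimes>\<^bsub>signed_alt_group k\<^esub> x \<noteq> \<one>\<^bsub>signed_alt_group k\<^esub>)"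
      using double_transposition_in_alt_group[OF k] double_transposition_no_involutive_lift[OF k] by blast
  qed
qed

definition signed_pairs :: "nat \<Rightarrow> (nat \<times> nat \<times> bool) set" where
  "signed_pairs k = (SIGMA i:{1..k}. ({1..k} - {i}) \<times> UNIV)"

definition signed_pair_act :: "signed_perm \<Rightarrow> nat \<times> nat \<times> bool \<Rightarrow> nat \<times> nat \<times> bool" where
  "signed_pair_act x = (\<lambda>(i, j, s). (fst x i, fst x j, s \<noteq> snd x (i, j)))"

definition signed_pair_action :: "nat \<Rightarrow> signed_perm \<Rightarrow> nat \<Rightarrow> nat" where
  "signed_pair_action k x = (\<lambda>n \<in> to_nat ` signed_pairs k. to_nat (signed_pair_act x (from_nat n)))"

lemma card_signed_pairs: "card (signed_pairs k) = 2 * k * (k - 1)"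
proof -
  have "card (signed_pairs k) = (\<Sum>i\<in>{1..k}. card (({1..k} - {i}) \<times> (UNIV :: bool set)))"
    unfolding signed_pairs_def by (rule card_SigmaI) auto
  also have "\<dots> = (\<Sum>i\<in>{1..k}. 2 * (k - 1))"
    by (intro sum.cong) (auto simp: card_cartesian_product)
  finally show ?thesis by simp
qed

lemma signed_pair_act_closed:
  assumes "x \<in> carrier (signed_alt_group k)" "p \<in> signed_pairs k"
  shows "signed_pair_act x p \<in> signed_pairs k"
proof -
  have "fst x permutes {1..k}"
    using assms(1) signed_alt_carrierD(1)[of "fst x" "snd x"] by (simp add: signed_alt_group_simps)
  then show ?thesis using assms(2) permutes_atLeastAtMost_iff
    by (auto simp: signed_pair_act_def signed_pairs_def)
qed

lemma group_action_signed_pair_action: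
  "group_action (signed_alt_group k) (to_nat ` signed_pairs k) (signed_pair_action k)"
  unfolding signed_pair_action_def restrict_def[symmetric]
proof (rule group_actionI[OF group_signed_alt_group])
  show "to_nat (signed_pair_act x (from_nat n)) \<in> to_nat ` signed_pairs k"
    if x: "x \<in> carrier (signed_alt_group k)" and n: "n \<in> to_nat ` signed_pairs k" for x n
    using n signed_pair_act_closed[OF x] by auto
  show "to_nat (signed_pair_act (x \<otimes>\<^bsub>signed_alt_group k\<^esub> y) (from_nat n)) =
        to_nat (signed_pair_act x (from_nat (to_nat (signed_pair_act y (from_nat n)))))" for x y n
    by (auto simp: signed_alt_group_simps signed_pair_act_def signed_mult_def split: prod.split)
  show "to_nat (signed_pair_act \<one>\<^bsub>signed_alt_group k\<^esub> (from_nat n)) = n"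
    if "n \<in> to_nat ` signed_pairs k" for n
    using that by (auto simp: signed_alt_group_simps signed_pair_act_def)
qed

lemma signed_pair_action_Pair:
  assumes "(i, j, s) \<in> signed_pairs k"
  shows "signed_pair_action k x (to_nat (i, j, s)) = to_nat (fst x i, fst x j, s \<noteq> snd x (i, j))"
  using assms by (simp add: signed_pair_action_def signed_pair_act_def)

lemma faithful_action_signed_pair_action:
  assumes k: "k \<ge> 2"
  shows "faithful_action (signed_alt_group k) (to_nat ` signed_pairs k) (signed_pair_action k)"
  unfolding faithful_action_def faithful_action_axioms_def
proof (intro conjI group_action_signed_pair_action inj_onI)
  fix x y
  assume x: "x \<in> carrier (signed_alt_group k)" and y: "y \<in> carrier (signed_alt_group k)"
    and eq: "signed_pair_action k x = signed_pair_action k y"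
  obtain \<sigma> d \<tau> e where xy: "x = (\<sigma>, d)" "y = (\<tau>, e)" by fastforce
  have xy_carrier: "(\<sigma>, d) \<in> signed_alt_carrier k" "(\<tau>, e) \<in> signed_alt_carrier k"
    using x y xy by (simp_all add: signed_alt_group_simps)
  note \<sigma> = signed_alt_carrierD[OF xy_carrier(1)] and \<tau> = signed_alt_carrierD[OF xy_carrier(2)]
  have agree: "\<sigma> i = \<tau> i \<and> d (i, j) = e (i, j)" if "i \<in> {1..k}" "j \<in> {1..k}" "i \<noteq> j" for i j
  proof -
    have p: "(i, j, False) \<in> signed_pairs k" using that by (simp add: signed_pairs_def)
    from fun_cong[OF eq, of "to_nat (i, j, False)"] show ?thesis
      unfolding xy signed_pair_action_Pair[OF p] by simp
  qed
  have "\<sigma> i = \<tau> i" for i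
  proof (cases "i \<in> {1..k}")
    case True
    define j where "j = (if i = 1 then 2 else (1::nat))"
    have "j \<in> {1..k}" "j \<noteq> i" using k True unfolding j_def by auto
    with True show ?thesis using agree by blast
  next
    case False
    then show ?thesis
      using permutes_not_in[OF \<sigma>(1)] permutes_not_in[OF \<tau>(1)] by metis
  qed
  moreover have "d (i, j) = e (i, j)" for i j
    using agree[of i j] \<sigma>(3)[of i j] \<tau>(3)[of i j] by blast
  ultimately show "x = y" unfolding xy by (auto simp: fun_eq_iff)
qed

lemma transitive_action_signed_pair_action:
  assumes k: "k \<ge> 4"
  shows "transitive_action (signed_alt_group k) (to_nat ` signed_pairs k) (signed_pair_action k)"
  unfolding transitive_action_def transitive_action_axioms_def
proof (intro conjI group_action_signed_pair_action allI impI)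
  fix a b assume a: "a \<in> to_nat ` signed_pairs k" and b: "b \<in> to_nat ` signed_pairs k"
  obtain i j s i' j' s' where p: "(i, j, s) \<in> signed_pairs k" "a = to_nat (i, j, s)"
    and p': "(i', j', s') \<in> signed_pairs k" "b = to_nat (i', j', s')"
    using a b by auto
  have ij: "i \<in> {1..k}" "j \<in> {1..k}" "i \<noteq> j" and ij': "i' \<in> {1..k}" "j' \<in> {1..k}" "i' \<noteq> j'"
    using p(1) p'(1) by (auto simp: signed_pairs_def)
  obtain \<sigma> where \<sigma>: "\<sigma> permutes {1..k}" "evenperm \<sigma>" "\<sigma> i = i'" "\<sigma> j = j'"
    using even_permutation_two_transitive[OF k ij ij'] .
  define t where "t = ((s \<noteq> inversion_signs k \<sigma> (i, j)) \<noteq> s')"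
  define x where "x = (\<sigma>, \<lambda>q. inversion_signs k \<sigma> q \<noteq> (t \<and> (q = (i, j) \<or> q = (j, i))))"
  have "x \<in> carrier (signed_alt_group k)"
    unfolding x_def signed_alt_group_simps
    using toggle_signs_in_carrier[OF inversion_signs_in_carrier[OF \<sigma>(1,2)] ij] .
  moreover have "signed_pair_action k x a = b"
    unfolding p(2) p'(2) signed_pair_action_Pair[OF p(1)] using ij(3)
    by (simp add: x_def \<sigma>(3,4) t_def) (cases s; cases s'; simp)
  ultimately show "\<exists>x\<in>carrier (signed_alt_group k). signed_pair_action k x a = b" by blast
qed

definition signed_perm_code :: "nat \<Rightarrow> signed_perm \<Rightarrow> nat" where
  "signed_perm_code k x =
     to_nat (map (fst x) [0..<Suc k], map (snd x) (List.product [0..<Suc k] [0..<Suc k]))"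

lemma signed_perm_code_inj: "inj_on (signed_perm_code k) (carrier (signed_alt_group k))"
proof (rule inj_onI)
  fix x y
  assume x: "x \<in> carrier (signed_alt_group k)" and y: "y \<in> carrier (signed_alt_group k)"
    and eq: "signed_perm_code k x = signed_perm_code k y"
  obtain \<sigma> d \<tau> e where xy: "x = (\<sigma>, d)" "y = (\<tau>, e)" by fastforce
  have xy_carrier: "(\<sigma>, d) \<in> signed_alt_carrier k" "(\<tau>, e) \<in> signed_alt_carrier k"
    using x y xy by (simp_all add: signed_alt_group_simps)
  have maps: "map \<sigma> [0..<Suc k] = map \<tau> [0..<Suc k]"
    "map d (List.product [0..<Suc k] [0..<Suc k]) = map e (List.product [0..<Suc k] [0..<Suc k])"
    using eq unfolding signed_perm_code_def xy by auto
  have "\<sigma> i = \<tau> i" for i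
  proof (cases "i \<le> k")
    case True
    then show ?thesis using maps(1) unfolding map_eq_conv by auto
  next
    case False
    then show ?thesis
      using permutes_not_in[OF signed_alt_carrierD(1)[OF xy_carrier(1)]]
        permutes_not_in[OF signed_alt_carrierD(1)[OF xy_carrier(2)]] by auto
  qed
  moreover have "d (i, j) = e (i, j)" for i j
  proof (cases "i \<le> k \<and> j \<le> k")
    case True
    then have "(i, j) \<in> set (List.product [0..<Suc k] [0..<Suc k])" by auto
    then show ?thesis using maps(2) unfolding map_eq_conv by blast
  next
    case False
    then show ?thesis
      using signed_alt_carrierD(3)[OF xy_carrier(1), of i j] signed_alt_carrierD(3)[OF xy_carrier(2), of i j]
      by auto
  qed
  ultimately show "x = y" unfolding xy by (auto simp: fun_eq_iff)
qed

theorem theorem4p4: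
  fixes k :: nat
  assumes "k \<ge> 7"
  shows "\<exists>(H :: nat monoid) (M :: nat set).
           group H \<and> finite (carrier H) \<and>
           M \<lhd> H \<and> M \<noteq> {\<one>\<^bsub>H\<^esub>} \<and> elementary_abelian_2_subgroup H M \<and>
           H Mod M \<cong> alt_group k \<and>
           nonsplit_extension H M \<and>
           (\<exists>(E :: nat set) \<phi>. E \<noteq> {} \<and> finite E \<and> card E \<le> 2 * k * (k - 1) \<and>
              group_action H E \<phi> \<and> faithful_action H E \<phi> \<and> transitive_action H E \<phi>)"
proof -
  let ?E = "to_nat ` signed_pairs k"
  have k: "k \<ge> 4" using assms by simp
  obtain H :: "nat monoid" and g where H: "group H" and g: "g \<in> iso H (signed_alt_group k)"
    using group_iso_copy[OF group_signed_alt_group signed_perm_code_inj] by blast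
  interpret cover: nonsplit_elementary_abelian_2_cover H "alt_group k" "fst \<circ> g"
    using nonsplit_elementary_abelian_2_cover_iso_pullback[OF signed_alt_group_cover[OF k] H g] .
  have act: "faithful_action H ?E (signed_pair_action k \<circ> g)"
    "transitive_action H ?E (signed_pair_action k \<circ> g)"
    using faithful_action_comp_iso[OF faithful_action_signed_pair_action H g]
      transitive_action_comp_iso[OF transitive_action_signed_pair_action[OF k] H g] k by simp_all
  have E: "card ?E = 2 * k * (k - 1)"
    by (simp add: card_image inj_on_subset[OF inj_to_nat] card_signed_pairs)
  then have "finite ?E" "?E \<noteq> {}" using k by (auto intro: card_ge_0_finite)
  moreover have "finite (carrier H)" using faithful_action.finite_carrier[OF act(1) \<open>finite ?E\<close>] .
  moreover have "group_action H ?E (signed_pair_action k \<circ> g)"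
    using act(1) by (simp add: faithful_action_def)
  ultimately show ?thesis
    using H act E cover.normal_kernel cover.kernel_ne_trivial cover.kernel_elementary_abelian_2
      cover.FactGroup_iso[OF cover.surj] cover.kernel_nonsplit
    by (intro exI[of _ H] exI[of _ "kernel H (alt_group k) (fst \<circ> g)"] conjI
        exI[of _ ?E] exI[of _ "signed_pair_action k \<circ> g"]) simp_all
qed

end
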